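(* Let $d\geq 2$, let $\mathcal S$ be the set of $d\times d$ density operators, and let $\mathrm d\rho$ be any probability measure on $\mathcal S$. Define $$B_1=1-\tfrac14\,\mathrm{Tr}\big(\mathbb E_\rho[\rho^2]-\mathbb E_\rho[\rho]^2\big),\qquad B_2=\frac1d\left(1+\sqrt{d-1}\,\sqrt{d\left(\mathbb E_\rho\Big[\sqrt{1-\mathrm{Tr}(\rho^2)}\Big]^2+\mathrm{Tr}\big(\mathbb E_\rho[\rho]^2\big)\right)-1}\right).$$ Then either $B_1=1$, or $B_2<B_1$.
   Context: $\mathbb E_\rho$ denotes expectation with respect to $\mathrm d\rho$. ($B_1$ and $B_2$ are both upper bounds on $\max_{\sigma\in\mathcal S}\mathbb E_\rho[F(\rho,\sigma)]$, $F$ being the fidelity.) *)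

theory Defs
  imports "HOL-Analysis.Analysis" "HOL-Probability.Probability"
begin

text \<open>Complex d x d matrices are represented as complex^'n^'n with d = CARD('n).
  Matrix product is (**), trace is the library trace.\<close>

definition hermitian_mat :: "complex^'n^'n \<Rightarrow> bool" where
  "hermitian_mat A \<longleftrightarrow> (\<forall>i j. A $ i $ j = cnj (A $ j $ i))"

definition psd_mat :: "complex^'n^'n \<Rightarrow> bool" where
  "psd_mat A \<longleftrightarrow> (\<forall>x::complex^'n.
     Im (\<Sum>i\<in>UNIV. cnj (x $ i) * (A *v x) $ i) = 0 \<and>
     Re (\<Sum>i\<in>UNIV. cnj (x $ i) * (A *v x) $ i) \<ge> 0)"

definition density_ops :: "(complex^'n^'n) set" where
  "density_ops = {\<rho>. hermitian_mat \<rho> \<and> psd_mat \<rho> \<and> trace \<rho> = 1}"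

end

theory Submission
  imports Defs
begin

text \<open>For a Hermitian matrix, \<open>Tr \<rho>\<^sup>2\<close> is the squared Frobenius norm, and positivity gives
  \<open>|\<rho>\<^sub>i\<^sub>k|\<^sup>2 \<le> \<rho>\<^sub>i\<^sub>i \<rho>\<^sub>k\<^sub>k\<close>, so density operators lie in the unit ball.
  Hence the variance \<open>V = Tr (E[\<rho>\<^sup>2] - E[\<rho>]\<^sup>2) = E \<parallel>\<rho>\<parallel>\<^sup>2 - \<parallel>E \<rho>\<parallel>\<^sup>2\<close> is nonnegative by Jensen,
  and Jensen again gives \<open>E[\<surd>(1 - Tr \<rho>\<^sup>2)]\<^sup>2 \<le> 1 - Tr E[\<rho>\<^sup>2]\<close>. The radicand in \<open>B\<^sub>2\<close> is
  therefore at most \<open>d (1 - V) - 1\<close>, and AM-GM yields \<open>B\<^sub>2 \<le> 1 - V/2\<close>, which is strictly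
  below \<open>B\<^sub>1 = 1 - V/4\<close> unless \<open>V = 0\<close>.\<close>

lemma quadratic_nonneg_discriminant:
  fixes a b n :: real
  assumes nonneg: "\<And>t. 0 \<le> a - 2 * t * n + t^2 * n * b" and "0 \<le> b"
  shows "n \<le> a * b"
proof (cases "b = 0")
  case True
  show ?thesis
  proof (rule ccontr)
    assume "\<not> ?thesis"
    then have "0 < n" using True by simp
    with True nonneg[of "(a + 1) / (2 * n)"] show False by (simp add: field_simps)
  qed
next
  case False
  with \<open>0 \<le> b\<close> nonneg[of "1 / b"] show ?thesis by (simp add: field_simps power2_eq_square)
qed

lemma quadratic_form_supported:
  fixes A :: "complex^'n^'n"
  assumes "\<And>j. j \<notin> S \<Longrightarrow> x $ j = 0"
  shows "(\<Sum>i\<in>UNIV. cnj (x $ i) * (A *v x) $ i) = (\<Sum>i\<in>S. \<Sum>j\<in>S. cnj (x $ i) * A$i$j * x$j)"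
proof -
  have "(A *v x) $ i = (\<Sum>j\<in>S. A$i$j * x$j)" for i
    unfolding matrix_vector_mult_def using assms by (auto intro: sum.mono_neutral_right)
  then have "(\<Sum>i\<in>UNIV. cnj (x $ i) * (A *v x) $ i) = (\<Sum>i\<in>UNIV. \<Sum>j\<in>S. cnj (x $ i) * A$i$j * x$j)"
    by (simp add: sum_distrib_left mult.assoc)
  also have "\<dots> = (\<Sum>i\<in>S. \<Sum>j\<in>S. cnj (x $ i) * A$i$j * x$j)"
    by (rule sum.mono_neutral_right) (auto simp: assms)
  finally show ?thesis .
qed

lemma psd_mat_diag_nonneg:
  fixes A :: "complex^'n^'n"
  assumes "psd_mat A" shows "0 \<le> Re (A $ i $ i)"
proof -
  define x :: "complex^'n" where "x = (\<chi> j. if j = i then 1 else 0)"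
  have "0 \<le> Re (\<Sum>j\<in>UNIV. cnj (x $ j) * (A *v x) $ j)"
    using assms unfolding psd_mat_def by blast
  also have "(\<Sum>j\<in>UNIV. cnj (x $ j) * (A *v x) $ j) = A $ i $ i"
    by (subst quadratic_form_supported[of "{i}"]) (simp_all add: x_def)
  finally show ?thesis .
qed

lemma hermitian_mat_diag_real: "hermitian_mat A \<Longrightarrow> A $ i $ i = of_real (Re (A $ i $ i))"
  unfolding hermitian_mat_def by (metis Reals_cnj_iff of_real_Re)

lemma psd_mat_offdiag_bound:
  fixes A :: "complex^'n^'n"
  assumes "hermitian_mat A" "psd_mat A"
  shows "(cmod (A $ i $ k))^2 \<le> Re (A $ i $ i) * Re (A $ k $ k)"
proof -
  obtain a b where a: "A$i$i = of_real a" and b: "A$k$k = of_real b"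
    using hermitian_mat_diag_real[OF assms(1)] by metis
  have "(cmod (A$i$k))^2 \<le> a * b"
  proof (cases "i = k")
    case True
    then show ?thesis using a b by (simp add: power2_eq_square)
  next
    case False
    have Aki: "A$k$i = cnj (A$i$k)" using assms(1) unfolding hermitian_mat_def by blast
    have "0 \<le> a - 2 * t * (cmod (A$i$k))^2 + t^2 * (cmod (A$i$k))^2 * b" for t
    proof -
      define x where "x = (\<chi> j. if j = i then 1 else if j = k then - of_real t * A$k$i else 0)"
      have "0 \<le> Re (\<Sum>j\<in>UNIV. cnj (x $ j) * (A *v x) $ j)"
        using assms(2) unfolding psd_mat_def by blast
      also have "(\<Sum>j\<in>UNIV. cnj (x $ j) * (A *v x) $ j) = (\<Sum>j\<in>{i,k}. \<Sum>l\<in>{i,k}. cnj (x $ j) * A$j$l * x$l)"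
        by (rule quadratic_form_supported) (simp add: x_def)
      also have "\<dots> = of_real a - 2 * of_real t * (A$i$k * cnj (A$i$k)) + of_real t ^ 2 * (A$i$k * cnj (A$i$k)) * of_real b"
        using False by (simp add: x_def Aki a b algebra_simps power2_eq_square)
      also have "\<dots> = of_real (a - 2 * t * (cmod (A$i$k))^2 + t^2 * (cmod (A$i$k))^2 * b)"
        by (simp add: complex_norm_square[symmetric])
      finally show ?thesis by simp
    qed
    then show ?thesis
      by (rule quadratic_nonneg_discriminant) (use psd_mat_diag_nonneg[OF assms(2), of k] b in simp)
  qed
  then show ?thesis using a b by simp
qed

lemma norm_vec_power2: "(norm x)^2 = (\<Sum>i\<in>UNIV. (norm (x $ i))^2)"
  by (simp add: norm_vec_def L2_set_def sum_nonneg)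

lemma hermitian_mat_trace_square:
  fixes A :: "complex^'n^'n"
  assumes "hermitian_mat A"
  shows "trace (A ** A) = of_real ((norm A)^2)"
proof -
  have "trace (A ** A) = (\<Sum>i\<in>UNIV. \<Sum>k\<in>UNIV. A$i$k * A$k$i)"
    by (simp add: trace_def matrix_matrix_mult_def)
  also have "\<dots> = (\<Sum>i\<in>UNIV. \<Sum>k\<in>UNIV. A$i$k * cnj (A$i$k))"
    using assms unfolding hermitian_mat_def by (intro sum.cong refl) metis
  also have "\<dots> = of_real (\<Sum>i\<in>UNIV. \<Sum>k\<in>UNIV. (cmod (A$i$k))^2)"
    by (simp add: complex_norm_square[symmetric])
  finally show ?thesis by (simp add: norm_vec_power2)
qed

lemma density_ops_norm_le_1:
  fixes \<rho> :: "complex^'n^'n"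
  assumes "\<rho> \<in> density_ops"
  shows "norm \<rho> \<le> 1"
proof -
  have h: "hermitian_mat \<rho>" and p: "psd_mat \<rho>" and "trace \<rho> = 1"
    using assms by (auto simp: density_ops_def)
  then have tr: "(\<Sum>i\<in>UNIV. Re (\<rho>$i$i)) = 1"
    by (metis Re_sum one_complex.sel(1) trace_def)
  have "(norm \<rho>)^2 = (\<Sum>i\<in>UNIV. \<Sum>k\<in>UNIV. (cmod (\<rho>$i$k))^2)"
    by (simp add: norm_vec_power2)
  also have "\<dots> \<le> (\<Sum>i\<in>UNIV. \<Sum>k\<in>UNIV. Re (\<rho>$i$i) * Re (\<rho>$k$k))"
    by (intro sum_mono psd_mat_offdiag_bound[OF h p])
  also have "\<dots> = 1"
    by (simp add: sum_product[symmetric] tr)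
  finally show ?thesis by (simp add: power_le_one_iff)
qed

lemma bounded_bilinear_matrix_mult:
  "bounded_bilinear ((**) :: complex^'n^'n \<Rightarrow> complex^'n^'n \<Rightarrow> complex^'n^'n)"
  unfolding bilinear_conv_bounded_bilinear[symmetric] bilinear_def linear_iff
  by (auto simp: vec_eq_iff matrix_matrix_mult_def sum_distrib_left sum.distrib algebra_simps scaleR_sum_right)

lemma bounded_linear_trace: "bounded_linear (trace :: 'a::real_normed_algebra_1^'n^'n \<Rightarrow> 'a)"
  unfolding trace_def
  by (intro bounded_linear_sum bounded_linear_compose[OF bounded_linear_vec_nth bounded_linear_vec_nth])

lemma (in prob_space) square_expectation_le:
  fixes X :: "'a \<Rightarrow> real"
  assumes "integrable M X" "integrable M (\<lambda>x. (X x)^2)"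
  shows "(expectation X)^2 \<le> expectation (\<lambda>x. (X x)^2)"
  using variance_positive[of X] variance_eq[OF assms] by simp

lemma integral_matrix_entry:
  fixes f :: "'a \<Rightarrow> 'b::euclidean_space^'n^'m"
  assumes "integrable M f"
  shows "integral\<^sup>L M f $ i $ j = integral\<^sup>L M (\<lambda>x. f x $ i $ j)"
  using integral_bounded_linear[OF bounded_linear_compose[OF bounded_linear_vec_nth bounded_linear_vec_nth] assms]
  by simp

locale density_ensemble = prob_space M
  for M :: "(complex^'n^'n) measure" +
  assumes sets_eq_density_ops: "sets M = sets (restrict_space borel density_ops)"
begin

lemma space_eq_density_ops: "space M = density_ops"
  using sets_eq_imp_space_eq[OF sets_eq_density_ops] by (simp add: space_restrict_space)

lemma integrable_continuous_bounded:
  fixes f :: "complex^'n^'n \<Rightarrow> 'b::{banach,second_countable_topology}"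
  assumes "continuous_on UNIV f" "\<And>\<rho>. \<rho> \<in> density_ops \<Longrightarrow> norm (f \<rho>) \<le> B"
  shows "integrable M f"
proof (rule integrable_const_bound[where B = B])
  have "f \<in> borel_measurable (restrict_space borel density_ops)"
    by (rule measurable_restrict_space1[OF borel_measurable_continuous_onI[OF assms(1)]])
  then show "f \<in> borel_measurable M"
    by (simp add: measurable_cong_sets[OF sets_eq_density_ops refl])
qed (auto simp: space_eq_density_ops assms(2) intro!: AE_I2)

lemma integrable_id: "integrable M (\<lambda>\<rho>. \<rho>)"
  by (rule integrable_continuous_bounded[where B = 1]) (auto intro: density_ops_norm_le_1)

lemma integrable_square: "integrable M (\<lambda>\<rho>. \<rho> ** \<rho>)"
proof -
  obtain K where "K > 0" and K: "\<forall>(A::complex^'n^'n) (B::complex^'n^'n). norm (A ** B) \<le> norm A * norm B * K"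
    using bounded_bilinear.pos_bounded[OF bounded_bilinear_matrix_mult] by blast
  have "norm (\<rho> ** \<rho>) \<le> K" if "\<rho> \<in> density_ops" for \<rho> :: "complex^'n^'n"
  proof -
    have "norm \<rho> * norm \<rho> \<le> 1"
      using density_ops_norm_le_1[OF that] by (simp add: mult_le_one)
    then have "norm \<rho> * norm \<rho> * K \<le> 1 * K"
      using \<open>K > 0\<close> by (intro mult_right_mono) simp_all
    then show ?thesis using K[rule_format, of \<rho> \<rho>] by simp
  qed
  moreover have "continuous_on UNIV (\<lambda>\<rho>::complex^'n^'n. \<rho> ** \<rho>)"
    using bounded_bilinear.continuous_on[OF bounded_bilinear_matrix_mult continuous_on_id continuous_on_id] .
  ultimately show ?thesis
    by (intro integrable_continuous_bounded[where B = K])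
qed

lemma integrable_norm_power2: "integrable M (\<lambda>\<rho>. (norm \<rho>)^2)"
  by (rule integrable_continuous_bounded[where B = 1])
     (simp_all add: continuous_on_power continuous_on_norm_id abs_square_le_1 density_ops_norm_le_1)

lemma hermitian_mean: "hermitian_mat (\<integral>\<rho>. \<rho> \<partial>M)"
  unfolding hermitian_mat_def
proof (intro allI)
  fix i j
  have "(\<integral>\<rho>. \<rho> \<partial>M) $ i $ j = (\<integral>\<rho>. cnj (\<rho> $ j $ i) \<partial>M)"
    unfolding integral_matrix_entry[OF integrable_id]
  proof (rule Bochner_Integration.integral_cong)
    fix \<rho> :: "complex^'n^'n" assume "\<rho> \<in> space M"
    then have "hermitian_mat \<rho>" by (simp add: space_eq_density_ops density_ops_def)
    then show "\<rho> $ i $ j = cnj (\<rho> $ j $ i)" unfolding hermitian_mat_def by blast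
  qed simp
  then show "(\<integral>\<rho>. \<rho> \<partial>M) $ i $ j = cnj ((\<integral>\<rho>. \<rho> \<partial>M) $ j $ i)"
    by (simp add: integral_matrix_entry[OF integrable_id])
qed

lemma expectation_purity: "Re (trace (\<integral>\<rho>. \<rho> ** \<rho> \<partial>M)) = (\<integral>\<rho>. (norm \<rho>)^2 \<partial>M)"
proof -
  have "Re (trace (\<integral>\<rho>. \<rho> ** \<rho> \<partial>M)) = (\<integral>\<rho>. Re (trace (\<rho> ** \<rho>)) \<partial>M)"
    using integral_bounded_linear[OF bounded_linear_trace integrable_square]
      integrable_bounded_linear[OF bounded_linear_trace integrable_square]
    by simp
  also have "\<dots> = (\<integral>\<rho>. (norm \<rho>)^2 \<partial>M)"
    by (rule Bochner_Integration.integral_cong)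
       (auto simp: space_eq_density_ops density_ops_def hermitian_mat_trace_square)
  finally show ?thesis .
qed

lemma purity_of_mean_nonneg: "0 \<le> Re (trace ((\<integral>\<rho>. \<rho> \<partial>M) ** (\<integral>\<rho>. \<rho> \<partial>M)))"
  by (simp add: hermitian_mat_trace_square[OF hermitian_mean])

lemma purity_of_mean_le:
  "Re (trace ((\<integral>\<rho>. \<rho> \<partial>M) ** (\<integral>\<rho>. \<rho> \<partial>M))) \<le> Re (trace (\<integral>\<rho>. \<rho> ** \<rho> \<partial>M))"
proof -
  have "Re (trace ((\<integral>\<rho>. \<rho> \<partial>M) ** (\<integral>\<rho>. \<rho> \<partial>M))) = (norm (\<integral>\<rho>. \<rho> \<partial>M))^2"
    by (simp add: hermitian_mat_trace_square[OF hermitian_mean])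
  also have "\<dots> \<le> (\<integral>\<rho>. norm \<rho> \<partial>M)^2"
    by (intro power_mono integral_norm_bound norm_ge_zero)
  also have "\<dots> \<le> (\<integral>\<rho>. (norm \<rho>)^2 \<partial>M)"
    by (intro square_expectation_le integrable_norm integrable_id integrable_norm_power2)
  finally show ?thesis by (simp add: expectation_purity)
qed

lemma mean_sqrt_mixedness_square_le:
  "(\<integral>\<rho>. sqrt (1 - Re (trace (\<rho> ** \<rho>))) \<partial>M)^2 \<le> 1 - Re (trace (\<integral>\<rho>. \<rho> ** \<rho> \<partial>M))"
proof -
  have norm_sq: "0 \<le> (norm \<rho>)^2 \<and> (norm \<rho>)^2 \<le> 1" if "\<rho> \<in> density_ops" for \<rho> :: "complex^'n^'n"
    using density_ops_norm_le_1[OF that] by (simp add: power_le_one)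
  have cont: "continuous_on UNIV (\<lambda>\<rho>::complex^'n^'n. sqrt (1 - (norm \<rho>)^2))"
    by (intro continuous_intros)
  have "(\<integral>\<rho>. sqrt (1 - Re (trace (\<rho> ** \<rho>))) \<partial>M) = (\<integral>\<rho>. sqrt (1 - (norm \<rho>)^2) \<partial>M)"
    by (rule Bochner_Integration.integral_cong)
       (auto simp: space_eq_density_ops density_ops_def hermitian_mat_trace_square)
  also have "(\<dots>)^2 \<le> (\<integral>\<rho>. (sqrt (1 - (norm \<rho>)^2))^2 \<partial>M)"
    by (intro square_expectation_le integrable_continuous_bounded[where B = 1] cont continuous_on_power)
       (use norm_sq in auto)
  also have "\<dots> = (\<integral>\<rho>. 1 - (norm \<rho>)^2 \<partial>M)"
    by (rule Bochner_Integration.integral_cong) (auto simp: space_eq_density_ops norm_sq)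
  also have "\<dots> = 1 - Re (trace (\<integral>\<rho>. \<rho> ** \<rho> \<partial>M))"
    using integrable_norm_power2 by (simp add: expectation_purity prob_space)
  finally show ?thesis .
qed

end

lemma fidelity_bounds_compare:
  fixes d p e s :: real
  assumes d: "2 \<le> d" and p: "0 \<le> p" "p < e" and s: "s^2 \<le> 1 - e"
  shows "(1/d) * (1 + sqrt (d - 1) * sqrt (d * (s^2 + p) - 1)) < 1 - (e - p) / 4"
proof -
  define y where "y = d * (s^2 + p) - 1"
  have "d * (s^2 + p) \<le> d * (1 - (e - p))"
    using d s by (intro mult_left_mono) auto
  then have y: "-1 \<le> y" "y \<le> (d - 1) - d * (e - p)"
    using d p by (auto simp: y_def algebra_simps)
  have "sqrt (d - 1) * sqrt y \<le> (d - 1) - d * (e - p) / 2"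
  proof (cases "0 \<le> y")
    case True
    have "sqrt (d - 1) * sqrt y \<le> ((d - 1) + y) / 2"
      using arith_geo_mean_sqrt[of "d - 1" y] True d by (simp add: real_sqrt_mult)
    then show ?thesis using y by simp
  next
    case False
    then have "sqrt (d - 1) * sqrt y \<le> 0"
      using d by (simp add: mult_nonneg_nonpos)
    moreover have "d * (e - p) \<le> d" using y by simp
    ultimately show ?thesis using d by (simp add: field_simps)
  qed
  then have "(1/d) * (1 + sqrt (d - 1) * sqrt y) \<le> (1/d) * (d - d * (e - p) / 2)"
    using d by (intro mult_left_mono) auto
  also have "\<dots> < 1 - (e - p) / 4"
    using d p by (simp add: field_simps)
  finally show ?thesis by (simp add: y_def)
qed

theorem corollary2:
  fixes M :: "(complex^'n^'n) measure"
  assumes d2: "CARD('n) \<ge> 2"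
    and prob: "prob_space M"
    and sets_M: "sets M = sets (restrict_space borel (density_ops :: (complex^'n^'n) set))"
  defines "B1 \<equiv> 1 - (1/4) * Re (trace ((integral\<^sup>L M (\<lambda>\<rho>. \<rho> ** \<rho>))
                        - (integral\<^sup>L M (\<lambda>\<rho>. \<rho>)) ** (integral\<^sup>L M (\<lambda>\<rho>. \<rho>))))"
    and "B2 \<equiv> (1 / real CARD('n)) * (1 + sqrt (real CARD('n) - 1) *
              sqrt (real CARD('n) *
                   ((integral\<^sup>L M (\<lambda>\<rho>. sqrt (1 - Re (trace (\<rho> ** \<rho>))))) ^ 2
                    + Re (trace ((integral\<^sup>L M (\<lambda>\<rho>. \<rho>)) ** (integral\<^sup>L M (\<lambda>\<rho>. \<rho>)))))
                   - 1))"
  shows "B1 = 1 \<or> B2 < B1"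
proof -
  interpret density_ensemble M
    by (intro density_ensemble.intro density_ensemble_axioms.intro prob sets_M)
  define p where "p = Re (trace ((\<integral>\<rho>. \<rho> \<partial>M) ** (\<integral>\<rho>. \<rho> \<partial>M)))"
  define e where "e = Re (trace (\<integral>\<rho>. \<rho> ** \<rho> \<partial>M))"
  have B1: "B1 = 1 - (e - p) / 4"
    by (simp add: B1_def p_def e_def trace_sub)
  have "p \<le> e"
    unfolding p_def e_def by (rule purity_of_mean_le)
  moreover have "p < e \<Longrightarrow> B2 < B1"
    unfolding B1 B2_def p_def[symmetric]
    using d2 purity_of_mean_nonneg mean_sqrt_mixedness_square_le
    by (intro fidelity_bounds_compare) (simp_all add: p_def e_def)
  ultimately show ?thesis using B1 by force
qed

end
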